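(* Let $M$ be a monoidal category and $C$ an $M$-actegory. The functors $R:C\to\mathit{Tamb}_{C,M}$, $x\mapsto R_x$, $f\mapsto R_f$, and $L:C^{op}\to\mathit{Tamb}_{M,C}$, $x\mapsto L_x$, $f\mapsto L_f$, are fully faithful.
   Context: $(M,\otimes,I,\lambda,a)$ is a monoidal category; an $M$-actegory is a category $C$ with a functor $\odot:M\times C\to C$ and coherent natural isomorphisms $\lambda_x:I\odot x\to x$, $a_{m,n,x}:(m\otimes n)\odot x\to m\odot(n\odot x)$; $M$ is an $M$-actegory via $\otimes$. Composition is diagrammatic. For $M$-actegories $C,D$, $\mathit{Tamb}_{C,D}$ is the category of functors $P:C^{op}\times D\to\mathrm{Set}$ with strength maps $P(c,d)\to P(m\odot c,m\odot d)$ natural in $c,d$, (di)natural in $m$, compatible with unitors/associators; morphisms are strength-preserving natural transformations. $R_x\in\mathit{Tamb}_{C,M}$ is $(c,n)\mapsto C(c,n\odot x)$ with strength $h\mapsto(m\odot h);a^{-1}_{m,n,x}$; $L_x\in\mathit{Tamb}_{M,C}$ is $(n,c)\mapsto C(n\odot x,c)$ with strength $h\mapsto a_{m,n,x};(m\odot h)$. For $f:x\to y$, $R_f:R_x\Rightarrow R_y$ postcomposes with $n\odot f$ and $L_f:L_y\Rightarrow L_x$ precomposes with $n\odot f$. *)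

theory Defs
  imports Main
begin

record ('o, 'a) cat =
  Obj  :: "'o set"
  Hom  :: "'o \<Rightarrow> 'o \<Rightarrow> 'a set"
  Id   :: "'o \<Rightarrow> 'a"
  Comp :: "'a \<Rightarrow> 'a \<Rightarrow> 'a"   (* Comp f g = f ; g  (first f, then g) *)

definition is_cat :: "('o, 'a, 'z) cat_scheme \<Rightarrow> bool" where
  "is_cat C \<longleftrightarrow>
     (\<forall>a b. a \<notin> Obj C \<or> b \<notin> Obj C \<longrightarrow> Hom C a b = {}) \<and>
     (\<forall>a\<in>Obj C. Id C a \<in> Hom C a a) \<and>
     (\<forall>a b c f g. f \<in> Hom C a b \<and> g \<in> Hom C b c \<longrightarrow> Comp C f g \<in> Hom C a c) \<and>
     (\<forall>a b f. f \<in> Hom C a b \<longrightarrow> Comp C (Id C a) f = f \<and> Comp C f (Id C b) = f) \<and>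
     (\<forall>a b c d f g h. f \<in> Hom C a b \<and> g \<in> Hom C b c \<and> h \<in> Hom C c d \<longrightarrow>
        Comp C (Comp C f g) h = Comp C f (Comp C g h))"

definition is_iso :: "('o, 'a, 'z) cat_scheme \<Rightarrow> 'o \<Rightarrow> 'o \<Rightarrow> 'a \<Rightarrow> 'a \<Rightarrow> bool" where
  "is_iso C a b f g \<longleftrightarrow> f \<in> Hom C a b \<and> g \<in> Hom C b a \<and>
     Comp C f g = Id C a \<and> Comp C g f = Id C b"

definition bifunctor ::
  "('a, 'f, 'z1) cat_scheme \<Rightarrow> ('b, 'g, 'z2) cat_scheme \<Rightarrow> ('c, 'h, 'z3) cat_scheme \<Rightarrow>
   ('a \<Rightarrow> 'b \<Rightarrow> 'c) \<Rightarrow> ('f \<Rightarrow> 'g \<Rightarrow> 'h) \<Rightarrow> bool" where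
  "bifunctor A B C F Fa \<longleftrightarrow>
     (\<forall>a\<in>Obj A. \<forall>b\<in>Obj B. F a b \<in> Obj C) \<and>
     (\<forall>a a' b b' f g. f \<in> Hom A a a' \<and> g \<in> Hom B b b' \<longrightarrow> Fa f g \<in> Hom C (F a b) (F a' b')) \<and>
     (\<forall>a\<in>Obj A. \<forall>b\<in>Obj B. Fa (Id A a) (Id B b) = Id C (F a b)) \<and>
     (\<forall>a a' a'' b b' b'' f f' g g'.
        f \<in> Hom A a a' \<and> f' \<in> Hom A a' a'' \<and> g \<in> Hom B b b' \<and> g' \<in> Hom B b' b'' \<longrightarrow>
        Fa (Comp A f f') (Comp B g g') = Comp C (Fa f g) (Fa f' g'))"

record ('m, 'ma) moncat = "('m, 'ma) cat" +
  tens_ob :: "'m \<Rightarrow> 'm \<Rightarrow> 'm"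
  tens    :: "'ma \<Rightarrow> 'ma \<Rightarrow> 'ma"
  unit_ob :: "'m"
  lu      :: "'m \<Rightarrow> 'ma"
  lu_inv  :: "'m \<Rightarrow> 'ma"
  ru      :: "'m \<Rightarrow> 'ma"
  ru_inv  :: "'m \<Rightarrow> 'ma"
  asc     :: "'m \<Rightarrow> 'm \<Rightarrow> 'm \<Rightarrow> 'ma"
  asc_inv :: "'m \<Rightarrow> 'm \<Rightarrow> 'm \<Rightarrow> 'ma"

definition monoidal :: "('m, 'ma) moncat \<Rightarrow> bool" where
  "monoidal M \<longleftrightarrow> is_cat M \<and> bifunctor M M M (tens_ob M) (tens M) \<and> unit_ob M \<in> Obj M \<and>
     (\<forall>m\<in>Obj M. is_iso M (tens_ob M (unit_ob M) m) m (lu M m) (lu_inv M m)) \<and>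
     (\<forall>m\<in>Obj M. is_iso M (tens_ob M m (unit_ob M)) m (ru M m) (ru_inv M m)) \<and>
     (\<forall>m\<in>Obj M. \<forall>n\<in>Obj M. \<forall>p\<in>Obj M.
        is_iso M (tens_ob M (tens_ob M m n) p) (tens_ob M m (tens_ob M n p))
                 (asc M m n p) (asc_inv M m n p)) \<and>
     (\<forall>m m' f. f \<in> Hom M m m' \<longrightarrow>
        Comp M (tens M (Id M (unit_ob M)) f) (lu M m') = Comp M (lu M m) f) \<and>
     (\<forall>m m' f. f \<in> Hom M m m' \<longrightarrow>
        Comp M (tens M f (Id M (unit_ob M))) (ru M m') = Comp M (ru M m) f) \<and>
     (\<forall>m m' n n' p p' f g h. f \<in> Hom M m m' \<and> g \<in> Hom M n n' \<and> h \<in> Hom M p p' \<longrightarrow>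
        Comp M (tens M (tens M f g) h) (asc M m' n' p') = Comp M (asc M m n p) (tens M f (tens M g h))) \<and>
     (\<forall>m\<in>Obj M. \<forall>n\<in>Obj M. \<forall>p\<in>Obj M. \<forall>q\<in>Obj M.
        Comp M (asc M (tens_ob M m n) p q) (asc M m n (tens_ob M p q)) =
        Comp M (tens M (asc M m n p) (Id M q))
          (Comp M (asc M m (tens_ob M n p) q) (tens M (Id M m) (asc M n p q)))) \<and>
     (\<forall>m\<in>Obj M. \<forall>n\<in>Obj M.
        Comp M (asc M m (unit_ob M) n) (tens M (Id M m) (lu M n)) = tens M (ru M m) (Id M n))"

record ('m, 'ma, 'c, 'ca) actegory = "('c, 'ca) cat" +
  act_ob    :: "'m \<Rightarrow> 'c \<Rightarrow> 'c"
  act       :: "'ma \<Rightarrow> 'ca \<Rightarrow> 'ca"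
  act_lu     :: "'c \<Rightarrow> 'ca"
  act_lu_inv :: "'c \<Rightarrow> 'ca"
  act_as     :: "'m \<Rightarrow> 'm \<Rightarrow> 'c \<Rightarrow> 'ca"
  act_as_inv :: "'m \<Rightarrow> 'm \<Rightarrow> 'c \<Rightarrow> 'ca"

definition is_actegory :: "('m, 'ma) moncat \<Rightarrow> ('m, 'ma, 'c, 'ca) actegory \<Rightarrow> bool" where
  "is_actegory M C \<longleftrightarrow> is_cat C \<and> bifunctor M C C (act_ob C) (act C) \<and>
     (\<forall>x\<in>Obj C. is_iso C (act_ob C (unit_ob M) x) x (act_lu C x) (act_lu_inv C x)) \<and>
     (\<forall>m\<in>Obj M. \<forall>n\<in>Obj M. \<forall>x\<in>Obj C.
        is_iso C (act_ob C (tens_ob M m n) x) (act_ob C m (act_ob C n x))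
                 (act_as C m n x) (act_as_inv C m n x)) \<and>
     (\<forall>x x' f. f \<in> Hom C x x' \<longrightarrow>
        Comp C (act C (Id M (unit_ob M)) f) (act_lu C x') = Comp C (act_lu C x) f) \<and>
     (\<forall>m m' n n' x x' g h f. g \<in> Hom M m m' \<and> h \<in> Hom M n n' \<and> f \<in> Hom C x x' \<longrightarrow>
        Comp C (act C (tens M g h) f) (act_as C m' n' x') =
        Comp C (act_as C m n x) (act C g (act C h f))) \<and>
     (\<forall>m\<in>Obj M. \<forall>n\<in>Obj M. \<forall>p\<in>Obj M. \<forall>x\<in>Obj C.
        Comp C (act_as C (tens_ob M m n) p x) (act_as C m n (act_ob C p x)) =
        Comp C (act C (asc M m n p) (Id C x))
          (Comp C (act_as C m (tens_ob M n p) x) (act C (Id M m) (act_as C n p x)))) \<and>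
     (\<forall>m\<in>Obj M. \<forall>x\<in>Obj C.
        Comp C (act_as C (unit_ob M) m x) (act_lu C (act_ob C m x)) = act C (lu M m) (Id C x)) \<and>
     (\<forall>m\<in>Obj M. \<forall>x\<in>Obj C.
        Comp C (act_as C m (unit_ob M) x) (act C (Id M m) (act_lu C x)) = act C (ru M m) (Id C x))"

text \<open>A profunctor P : C^op x D \<rightarrow> Set with strength, values being sets of elements of type 'v.
  pmor f g u is the action P(f,g) for f : c' \<rightarrow> c in C and g : d \<rightarrow> d' in D;
  pstr m c d u is the strength P(c,d) \<rightarrow> P(m.c, m.d).\<close>

record ('c, 'ca, 'd, 'da, 'm, 'v) tambara =
  pob  :: "'c \<Rightarrow> 'd \<Rightarrow> 'v set"
  pmor :: "'ca \<Rightarrow> 'da \<Rightarrow> 'v \<Rightarrow> 'v"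
  pstr :: "'m \<Rightarrow> 'c \<Rightarrow> 'd \<Rightarrow> 'v \<Rightarrow> 'v"

definition tamb_mor ::
  "('c, 'ca, 'z1) cat_scheme \<Rightarrow> ('d, 'da, 'z2) cat_scheme \<Rightarrow> 'm set \<Rightarrow>
   ('m \<Rightarrow> 'c \<Rightarrow> 'c) \<Rightarrow> ('m \<Rightarrow> 'd \<Rightarrow> 'd) \<Rightarrow>
   ('c, 'ca, 'd, 'da, 'm, 'v) tambara \<Rightarrow> ('c, 'ca, 'd, 'da, 'm, 'w) tambara \<Rightarrow>
   ('c \<Rightarrow> 'd \<Rightarrow> 'v \<Rightarrow> 'w) \<Rightarrow> bool" where
  "tamb_mor C D MO actC actD P Q \<tau> \<longleftrightarrow>
     (\<forall>c\<in>Obj C. \<forall>d\<in>Obj D. \<forall>u\<in>pob P c d. \<tau> c d u \<in> pob Q c d) \<and>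
     (\<forall>c c' d d' f g u. c \<in> Obj C \<and> c' \<in> Obj C \<and> d \<in> Obj D \<and> d' \<in> Obj D \<and>
        f \<in> Hom C c' c \<and> g \<in> Hom D d d' \<and> u \<in> pob P c d \<longrightarrow>
        \<tau> c' d' (pmor P f g u) = pmor Q f g (\<tau> c d u)) \<and>
     (\<forall>m\<in>MO. \<forall>c\<in>Obj C. \<forall>d\<in>Obj D. \<forall>u\<in>pob P c d.
        \<tau> (actC m c) (actD m d) (pstr P m c d u) = pstr Q m c d (\<tau> c d u))"

definition tamb_eq ::
  "('c, 'ca, 'z1) cat_scheme \<Rightarrow> ('d, 'da, 'z2) cat_scheme \<Rightarrow>
   ('c, 'ca, 'd, 'da, 'm, 'v) tambara \<Rightarrow> ('c \<Rightarrow> 'd \<Rightarrow> 'v \<Rightarrow> 'w) \<Rightarrow> ('c \<Rightarrow> 'd \<Rightarrow> 'v \<Rightarrow> 'w) \<Rightarrow> bool" where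
  "tamb_eq C D P \<tau> \<sigma> \<longleftrightarrow> (\<forall>c\<in>Obj C. \<forall>d\<in>Obj D. \<forall>u\<in>pob P c d. \<tau> c d u = \<sigma> c d u)"

definition Rprof :: "('m, 'ma) moncat \<Rightarrow> ('m, 'ma, 'c, 'ca) actegory \<Rightarrow> 'c \<Rightarrow>
    ('c, 'ca, 'm, 'ma, 'm, 'ca) tambara" where
  "Rprof M C x =
     \<lparr> pob = (\<lambda>c n. Hom C c (act_ob C n x)),
       pmor = (\<lambda>f g h. Comp C f (Comp C h (act C g (Id C x)))),
       pstr = (\<lambda>m c n h. Comp C (act C (Id M m) h) (act_as_inv C m n x)) \<rparr>"

definition Rmor :: "('m, 'ma) moncat \<Rightarrow> ('m, 'ma, 'c, 'ca) actegory \<Rightarrow> 'ca \<Rightarrow> 'c \<Rightarrow> 'm \<Rightarrow> 'ca \<Rightarrow> 'ca" where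
  "Rmor M C f = (\<lambda>c n h. Comp C h (act C (Id M n) f))"

definition Lprof :: "('m, 'ma) moncat \<Rightarrow> ('m, 'ma, 'c, 'ca) actegory \<Rightarrow> 'c \<Rightarrow>
    ('m, 'ma, 'c, 'ca, 'm, 'ca) tambara" where
  "Lprof M C x =
     \<lparr> pob = (\<lambda>n c. Hom C (act_ob C n x) c),
       pmor = (\<lambda>g f h. Comp C (act C g (Id C x)) (Comp C h f)),
       pstr = (\<lambda>m n c h. Comp C (act_as C m n x) (act C (Id M m) h)) \<rparr>"

definition Lmor :: "('m, 'ma) moncat \<Rightarrow> ('m, 'ma, 'c, 'ca) actegory \<Rightarrow> 'ca \<Rightarrow> 'm \<Rightarrow> 'c \<Rightarrow> 'ca \<Rightarrow> 'ca" where
  "Lmor M C f = (\<lambda>n c h. Comp C (act C (Id M n) f) h)"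

end

theory Submission
  imports Defs
begin

text \<open>The Tambara module R_x is generated by the single element \<lambda>_x\<inverse> of R_x(x, I):
  by the unit coherence a(n, I, x) ; (n \<odot> \<lambda>_x) = \<rho>_n \<odot> x, every h : c \<rightarrow> n \<odot> x arises from
  \<lambda>_x\<inverse> by the strength for n followed by the profunctor action of (h, \<rho>_n). Hence a Tambara
  morphism \<tau> : R_x \<Rightarrow> R_y is determined by t = \<tau>(\<lambda>_x\<inverse>) : x \<rightarrow> I \<odot> y, and the same computation
  applied to t shows \<tau> = R_f for f = t ; \<lambda>_y. Conversely R_f sends \<lambda>_x\<inverse> to \<lambda>_x\<inverse> ; (I \<odot> f), from
  which f is recovered by naturality of \<lambda>, so R is faithful. Dually, L_y is generated by
  \<lambda>_y \<in> L_y(I, y), and \<tau> : L_y \<Rightarrow> L_x equals L_f for f = \<lambda>_x\<inverse> ; \<tau>(\<lambda>_y).\<close>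

locale category =
  fixes C :: "('o, 'a, 'z) cat_scheme"
  assumes is_cat: "is_cat C"
begin

lemma hom_objs: "f \<in> Hom C a b \<Longrightarrow> a \<in> Obj C \<and> b \<in> Obj C"
  using is_cat unfolding is_cat_def by blast

lemma id_hom: "a \<in> Obj C \<Longrightarrow> Id C a \<in> Hom C a a"
  using is_cat unfolding is_cat_def by blast

lemma comp_hom: "f \<in> Hom C a b \<Longrightarrow> g \<in> Hom C b c \<Longrightarrow> Comp C f g \<in> Hom C a c"
  using is_cat unfolding is_cat_def by blast

lemma comp_id_left: "f \<in> Hom C a b \<Longrightarrow> Comp C (Id C a) f = f"
  using is_cat unfolding is_cat_def by blast

lemma comp_id_right: "f \<in> Hom C a b \<Longrightarrow> Comp C f (Id C b) = f"
  using is_cat unfolding is_cat_def by blast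

lemma comp_assoc:
  "f \<in> Hom C a b \<Longrightarrow> g \<in> Hom C b c \<Longrightarrow> h \<in> Hom C c d \<Longrightarrow>
   Comp C (Comp C f g) h = Comp C f (Comp C g h)"
  using is_cat unfolding is_cat_def by blast

lemma iso_square_inv:
  assumes p: "is_iso C a b p p'" and q: "is_iso C a' b' q q'"
    and u: "u \<in> Hom C a a'" and v: "v \<in> Hom C b b'"
    and square: "Comp C u q = Comp C p v"
  shows "Comp C p' u = Comp C v q'"
proof -
  have p_hom: "p \<in> Hom C a b" "p' \<in> Hom C b a" and p'p: "Comp C p' p = Id C b"
    using p unfolding is_iso_def by auto
  have q_hom: "q \<in> Hom C a' b'" "q' \<in> Hom C b' a'" and qq': "Comp C q q' = Id C a'"
    using q unfolding is_iso_def by auto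
  have vq': "Comp C v q' \<in> Hom C b a'"
    using comp_hom[OF v q_hom(2)] .
  have "Comp C p' u = Comp C p' (Comp C (Comp C u q) q')"
    using comp_assoc[OF u q_hom] qq' comp_id_right[OF u] by simp
  also have "\<dots> = Comp C (Comp C p' p) (Comp C v q')"
    using square comp_assoc[OF p_hom(1) v q_hom(2)] comp_assoc[OF p_hom(2) p_hom(1) vq'] by simp
  also have "\<dots> = Comp C v q'"
    using p'p comp_id_left[OF vq'] by simp
  finally show ?thesis .
qed

lemma id_iso: "a \<in> Obj C \<Longrightarrow> is_iso C a a (Id C a) (Id C a)"
  using id_hom comp_id_left unfolding is_iso_def by blast

end

lemma tamb_mor_closed:
  "tamb_mor C D MO actC actD P Q \<tau> \<Longrightarrow> c \<in> Obj C \<Longrightarrow> d \<in> Obj D \<Longrightarrow> u \<in> pob P c d \<Longrightarrow>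
   \<tau> c d u \<in> pob Q c d"
  unfolding tamb_mor_def by blast

lemma tamb_mor_natural:
  "tamb_mor C D MO actC actD P Q \<tau> \<Longrightarrow> c \<in> Obj C \<Longrightarrow> c' \<in> Obj C \<Longrightarrow> d \<in> Obj D \<Longrightarrow> d' \<in> Obj D \<Longrightarrow>
   f \<in> Hom C c' c \<Longrightarrow> g \<in> Hom D d d' \<Longrightarrow> u \<in> pob P c d \<Longrightarrow>
   \<tau> c' d' (pmor P f g u) = pmor Q f g (\<tau> c d u)"
  unfolding tamb_mor_def by blast

lemma tamb_mor_strong:
  "tamb_mor C D MO actC actD P Q \<tau> \<Longrightarrow> m \<in> MO \<Longrightarrow> c \<in> Obj C \<Longrightarrow> d \<in> Obj D \<Longrightarrow> u \<in> pob P c d \<Longrightarrow>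
   \<tau> (actC m c) (actD m d) (pstr P m c d u) = pstr Q m c d (\<tau> c d u)"
  unfolding tamb_mor_def by blast

locale monoidal_action =
  fixes M :: "('m, 'ma) moncat" and C :: "('m, 'ma, 'c, 'ca) actegory"
  assumes monoidal: "monoidal M" and actegory: "is_actegory M C"
begin

sublocale M: category M
  using monoidal by unfold_locales (simp add: monoidal_def)

sublocale C: category C
  using actegory by unfold_locales (simp add: is_actegory_def)

abbreviation comp (infixr "\<Zsemi>" 55) where "f \<Zsemi> g \<equiv> Comp C f g"
abbreviation act_obj (infixr "\<odot>" 65) where "m \<odot> x \<equiv> act_ob C m x"
abbreviation act_left (infixr "\<rhd>" 65) where "n \<rhd> f \<equiv> act C (Id M n) f"
abbreviation act_right (infixl "\<lhd>" 65) where "g \<lhd> x \<equiv> act C g (Id C x)"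
abbreviation tensor (infixr "\<otimes>" 70) where "m \<otimes> n \<equiv> tens_ob M m n"
abbreviation I where "I \<equiv> unit_ob M"

lemma act_bifunctor: "bifunctor M C C (act_ob C) (act C)"
  using actegory unfolding is_actegory_def by (elim conjE) auto

lemma act_obj_closed: "m \<in> Obj M \<Longrightarrow> x \<in> Obj C \<Longrightarrow> m \<odot> x \<in> Obj C"
  using act_bifunctor unfolding bifunctor_def by blast

lemma act_hom: "g \<in> Hom M m m' \<Longrightarrow> f \<in> Hom C x x' \<Longrightarrow> act C g f \<in> Hom C (m \<odot> x) (m' \<odot> x')"
  using act_bifunctor unfolding bifunctor_def by blast

lemma act_id: "m \<in> Obj M \<Longrightarrow> x \<in> Obj C \<Longrightarrow> m \<rhd> Id C x = Id C (m \<odot> x)"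
  using act_bifunctor unfolding bifunctor_def by blast

lemma act_comp:
  "g \<in> Hom M m m' \<Longrightarrow> g' \<in> Hom M m' m'' \<Longrightarrow> f \<in> Hom C x x' \<Longrightarrow> f' \<in> Hom C x' x'' \<Longrightarrow>
   act C (Comp M g g') (f \<Zsemi> f') = act C g f \<Zsemi> act C g' f'"
  using act_bifunctor unfolding bifunctor_def by blast

lemma tensor_bifunctor: "bifunctor M M M (tens_ob M) (tens M)"
  using monoidal unfolding monoidal_def by (elim conjE) auto

lemma tensor_closed: "m \<in> Obj M \<Longrightarrow> n \<in> Obj M \<Longrightarrow> m \<otimes> n \<in> Obj M"
  using tensor_bifunctor unfolding bifunctor_def by blast

lemma tensor_id: "m \<in> Obj M \<Longrightarrow> n \<in> Obj M \<Longrightarrow> tens M (Id M m) (Id M n) = Id M (m \<otimes> n)"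
  using tensor_bifunctor unfolding bifunctor_def by blast

lemma unit_obj: "I \<in> Obj M"
  using monoidal unfolding monoidal_def by (elim conjE) auto

lemma ru_iso: "m \<in> Obj M \<Longrightarrow> is_iso M (m \<otimes> I) m (ru M m) (ru_inv M m)"
  using monoidal unfolding monoidal_def by (elim conjE) auto

lemma act_lu_iso: "x \<in> Obj C \<Longrightarrow> is_iso C (I \<odot> x) x (act_lu C x) (act_lu_inv C x)"
  using actegory unfolding is_actegory_def by (elim conjE) auto

lemma act_as_iso:
  "m \<in> Obj M \<Longrightarrow> n \<in> Obj M \<Longrightarrow> x \<in> Obj C \<Longrightarrow>
   is_iso C ((m \<otimes> n) \<odot> x) (m \<odot> n \<odot> x) (act_as C m n x) (act_as_inv C m n x)"
  using actegory unfolding is_actegory_def by (elim conjE) auto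

lemma act_lu_natural: "f \<in> Hom C x x' \<Longrightarrow> I \<rhd> f \<Zsemi> act_lu C x' = act_lu C x \<Zsemi> f"
  using actegory unfolding is_actegory_def by (elim conjE) auto

lemma act_as_natural:
  "g \<in> Hom M m m' \<Longrightarrow> h \<in> Hom M n n' \<Longrightarrow> f \<in> Hom C x x' \<Longrightarrow>
   act C (tens M g h) f \<Zsemi> act_as C m' n' x' = act_as C m n x \<Zsemi> act C g (act C h f)"
  using actegory unfolding is_actegory_def by (elim conjE) auto

lemma act_ru_coherence:
  "m \<in> Obj M \<Longrightarrow> x \<in> Obj C \<Longrightarrow> act_as C m I x \<Zsemi> m \<rhd> act_lu C x = ru M m \<lhd> x"
  using actegory unfolding is_actegory_def by (elim conjE) auto

lemma act_lu_hom: "x \<in> Obj C \<Longrightarrow> act_lu C x \<in> Hom C (I \<odot> x) x"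
  and act_lu_inv_hom: "x \<in> Obj C \<Longrightarrow> act_lu_inv C x \<in> Hom C x (I \<odot> x)"
  and act_lu_inv_lu: "x \<in> Obj C \<Longrightarrow> act_lu_inv C x \<Zsemi> act_lu C x = Id C x"
  using act_lu_iso unfolding is_iso_def by auto

lemma act_as_hom:
    "m \<in> Obj M \<Longrightarrow> n \<in> Obj M \<Longrightarrow> x \<in> Obj C \<Longrightarrow>
     act_as C m n x \<in> Hom C ((m \<otimes> n) \<odot> x) (m \<odot> n \<odot> x)"
  and act_as_inv_hom:
    "m \<in> Obj M \<Longrightarrow> n \<in> Obj M \<Longrightarrow> x \<in> Obj C \<Longrightarrow>
     act_as_inv C m n x \<in> Hom C (m \<odot> n \<odot> x) ((m \<otimes> n) \<odot> x)"
  using act_as_iso unfolding is_iso_def by auto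

lemma ru_hom: "m \<in> Obj M \<Longrightarrow> ru M m \<in> Hom M (m \<otimes> I) m"
  and ru_inv_hom: "m \<in> Obj M \<Longrightarrow> ru_inv M m \<in> Hom M m (m \<otimes> I)"
  using ru_iso unfolding is_iso_def by auto

lemma act_left_comp:
  "m \<in> Obj M \<Longrightarrow> h \<in> Hom C a b \<Longrightarrow> k \<in> Hom C b c \<Longrightarrow> m \<rhd> (h \<Zsemi> k) = m \<rhd> h \<Zsemi> m \<rhd> k"
  using act_comp[OF M.id_hom M.id_hom] M.comp_id_left[OF M.id_hom] by metis

lemma act_right_comp:
  "g \<in> Hom M a b \<Longrightarrow> g' \<in> Hom M b c \<Longrightarrow> x \<in> Obj C \<Longrightarrow> Comp M g g' \<lhd> x = g \<lhd> x \<Zsemi> g' \<lhd> x"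
  using act_comp[OF _ _ C.id_hom C.id_hom] C.comp_id_left[OF C.id_hom] by metis

lemma act_left_iso:
  "m \<in> Obj M \<Longrightarrow> is_iso C x y f f' \<Longrightarrow> is_iso C (m \<odot> x) (m \<odot> y) (m \<rhd> f) (m \<rhd> f')"
  unfolding is_iso_def using act_hom[OF M.id_hom] act_left_comp act_id C.hom_objs by metis

lemma act_right_iso:
  "x \<in> Obj C \<Longrightarrow> is_iso M m n g g' \<Longrightarrow> is_iso C (m \<odot> x) (n \<odot> x) (g \<lhd> x) (g' \<lhd> x)"
  unfolding is_iso_def using act_hom[OF _ C.id_hom] act_right_comp act_id M.hom_objs by metis

lemma act_interchange:
  assumes g: "g \<in> Hom M n n'" and f: "f \<in> Hom C x y"
  shows "g \<lhd> x \<Zsemi> n' \<rhd> f = n \<rhd> f \<Zsemi> g \<lhd> y"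
proof -
  have n: "n \<in> Obj M" "n' \<in> Obj M" and x: "x \<in> Obj C" "y \<in> Obj C"
    using M.hom_objs[OF g] C.hom_objs[OF f] by auto
  have "g \<lhd> x \<Zsemi> n' \<rhd> f = act C g f"
    using act_comp[OF g M.id_hom[OF n(2)] C.id_hom[OF x(1)] f] M.comp_id_right[OF g] C.comp_id_left[OF f]
    by simp
  also have "\<dots> = n \<rhd> f \<Zsemi> g \<lhd> y"
    using act_comp[OF M.id_hom[OF n(1)] g f C.id_hom[OF x(2)]] M.comp_id_left[OF g] C.comp_id_right[OF f]
    by simp
  finally show ?thesis .
qed

lemma act_as_natural_left:
  "m \<in> Obj M \<Longrightarrow> n \<in> Obj M \<Longrightarrow> f \<in> Hom C x y \<Longrightarrow>
   (m \<otimes> n) \<rhd> f \<Zsemi> act_as C m n y = act_as C m n x \<Zsemi> m \<rhd> n \<rhd> f"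
  using act_as_natural[OF M.id_hom M.id_hom] tensor_id by metis

lemma act_as_inv_natural:
  assumes m: "m \<in> Obj M" and n: "n \<in> Obj M" and f: "f \<in> Hom C x y"
  shows "act_as_inv C m n x \<Zsemi> (m \<otimes> n) \<rhd> f = m \<rhd> n \<rhd> f \<Zsemi> act_as_inv C m n y"
proof (rule C.iso_square_inv)
  have "x \<in> Obj C" "y \<in> Obj C"
    using C.hom_objs[OF f] by auto
  then show "is_iso C ((m \<otimes> n) \<odot> x) (m \<odot> n \<odot> x) (act_as C m n x) (act_as_inv C m n x)"
    and "is_iso C ((m \<otimes> n) \<odot> y) (m \<odot> n \<odot> y) (act_as C m n y) (act_as_inv C m n y)"
    using act_as_iso m n by auto
  show "(m \<otimes> n) \<rhd> f \<in> Hom C ((m \<otimes> n) \<odot> x) ((m \<otimes> n) \<odot> y)"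
    using act_hom[OF M.id_hom[OF tensor_closed[OF m n]] f] .
  show "m \<rhd> n \<rhd> f \<in> Hom C (m \<odot> n \<odot> x) (m \<odot> n \<odot> y)"
    using act_hom[OF M.id_hom[OF m] act_hom[OF M.id_hom[OF n] f]] .
  show "(m \<otimes> n) \<rhd> f \<Zsemi> act_as C m n y = act_as C m n x \<Zsemi> m \<rhd> n \<rhd> f"
    using act_as_natural_left[OF m n f] .
qed

lemma act_as_inv_ru:
  assumes n: "n \<in> Obj M" and z: "z \<in> Obj C"
  shows "act_as_inv C n I z \<Zsemi> ru M n \<lhd> z = n \<rhd> act_lu C z"
proof -
  have ru_z: "ru M n \<lhd> z \<in> Hom C ((n \<otimes> I) \<odot> z) (n \<odot> z)"
    using act_hom[OF ru_hom[OF n] C.id_hom[OF z]] .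
  have n_lu: "n \<rhd> act_lu C z \<in> Hom C (n \<odot> I \<odot> z) (n \<odot> z)"
    using act_hom[OF M.id_hom[OF n] act_lu_hom[OF z]] .
  have "act_as_inv C n I z \<Zsemi> ru M n \<lhd> z = n \<rhd> act_lu C z \<Zsemi> Id C (n \<odot> z)"
  proof (rule C.iso_square_inv[OF act_as_iso[OF n unit_obj z] C.id_iso[OF act_obj_closed[OF n z]] ru_z n_lu])
    show "ru M n \<lhd> z \<Zsemi> Id C (n \<odot> z) = act_as C n I z \<Zsemi> n \<rhd> act_lu C z"
      using act_ru_coherence[OF n z] C.comp_id_right[OF ru_z] by simp
  qed
  then show ?thesis
    using C.comp_id_right[OF n_lu] by simp
qed

lemma act_ru_inv_as:
  assumes n: "n \<in> Obj M" and x: "x \<in> Obj C"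
  shows "ru_inv M n \<lhd> x \<Zsemi> act_as C n I x = n \<rhd> act_lu_inv C x"
proof -
  have nx: "n \<odot> x \<in> Obj C"
    using act_obj_closed[OF n x] .
  have "ru_inv M n \<lhd> x \<Zsemi> act_as C n I x = Id C (n \<odot> x) \<Zsemi> n \<rhd> act_lu_inv C x"
  proof (rule C.iso_square_inv[OF act_right_iso[OF x ru_iso[OF n]] act_left_iso[OF n act_lu_iso[OF x]]
        act_as_hom[OF n unit_obj x] C.id_hom[OF nx]])
    show "act_as C n I x \<Zsemi> n \<rhd> act_lu C x = ru M n \<lhd> x \<Zsemi> Id C (n \<odot> x)"
      using act_ru_coherence[OF n x] C.comp_id_right act_hom[OF ru_hom[OF n] C.id_hom[OF x]] by simp
  qed
  then show ?thesis
    using C.comp_id_left act_hom[OF M.id_hom[OF n] act_lu_inv_hom[OF x]] by simp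
qed

lemma act_lu_conjugate:
  assumes f: "f \<in> Hom C x y"
  shows "act_lu_inv C x \<Zsemi> I \<rhd> f \<Zsemi> act_lu C y = f"
proof -
  have x: "x \<in> Obj C"
    using C.hom_objs[OF f] by simp
  have "act_lu_inv C x \<Zsemi> I \<rhd> f \<Zsemi> act_lu C y = (act_lu_inv C x \<Zsemi> act_lu C x) \<Zsemi> f"
    using act_lu_natural[OF f] C.comp_assoc[OF act_lu_inv_hom[OF x] act_lu_hom[OF x] f] by simp
  also have "\<dots> = f"
    using act_lu_inv_lu[OF x] C.comp_id_left[OF f] by simp
  finally show ?thesis .
qed

lemma Rprof_pmor_ru_pstr:
  assumes n: "n \<in> Obj M" and z: "z \<in> Obj C" and w: "w \<in> Hom C c (I \<odot> z)"
  shows "pmor (Rprof M C z) h (ru M n) (pstr (Rprof M C z) n c I w) = h \<Zsemi> n \<rhd> (w \<Zsemi> act_lu C z)"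
proof -
  have "(n \<rhd> w \<Zsemi> act_as_inv C n I z) \<Zsemi> ru M n \<lhd> z = n \<rhd> w \<Zsemi> n \<rhd> act_lu C z"
    using C.comp_assoc[OF act_hom[OF M.id_hom[OF n] w] act_as_inv_hom[OF n unit_obj z]
        act_hom[OF ru_hom[OF n] C.id_hom[OF z]]] act_as_inv_ru[OF n z]
    by simp
  then show ?thesis
    unfolding Rprof_def using act_left_comp[OF n w act_lu_hom[OF z]] by simp
qed

lemma Rprof_generated_by_act_lu_inv:
  assumes n: "n \<in> Obj M" and x: "x \<in> Obj C" and h: "h \<in> Hom C c (n \<odot> x)"
  shows "pmor (Rprof M C x) h (ru M n) (pstr (Rprof M C x) n x I (act_lu_inv C x)) = h"
  using Rprof_pmor_ru_pstr[OF n x act_lu_inv_hom[OF x]] act_lu_inv_lu[OF x] act_id[OF n x]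
    C.comp_id_right[OF h] by simp

lemma Lprof_pmor_ru_inv_pstr:
  assumes n: "n \<in> Obj M" and z: "z \<in> Obj C" and w: "w \<in> Hom C (I \<odot> z) c"
    and h: "h \<in> Hom C (n \<odot> c) d"
  shows "pmor (Lprof M C z) (ru_inv M n) h (pstr (Lprof M C z) n I c w) = n \<rhd> (act_lu_inv C z \<Zsemi> w) \<Zsemi> h"
proof -
  have ru_inv_z: "ru_inv M n \<lhd> z \<in> Hom C (n \<odot> z) ((n \<otimes> I) \<odot> z)"
    using act_hom[OF ru_inv_hom[OF n] C.id_hom[OF z]] .
  have as_z: "act_as C n I z \<in> Hom C ((n \<otimes> I) \<odot> z) (n \<odot> I \<odot> z)"
    using act_as_hom[OF n unit_obj z] .
  have nw: "n \<rhd> w \<in> Hom C (n \<odot> I \<odot> z) (n \<odot> c)"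
    using act_hom[OF M.id_hom[OF n] w] .
  have "ru_inv M n \<lhd> z \<Zsemi> (act_as C n I z \<Zsemi> n \<rhd> w) \<Zsemi> h
      = ((ru_inv M n \<lhd> z \<Zsemi> act_as C n I z) \<Zsemi> n \<rhd> w) \<Zsemi> h"
    using C.comp_assoc[OF as_z nw h] C.comp_assoc[OF ru_inv_z as_z C.comp_hom[OF nw h]]
      C.comp_assoc[OF C.comp_hom[OF ru_inv_z as_z] nw h] by simp
  also have "\<dots> = n \<rhd> (act_lu_inv C z \<Zsemi> w) \<Zsemi> h"
    using act_ru_inv_as[OF n z] act_left_comp[OF n act_lu_inv_hom[OF z] w] by simp
  finally show ?thesis
    unfolding Lprof_def by simp
qed

lemma Lprof_generated_by_act_lu:
  assumes n: "n \<in> Obj M" and y: "y \<in> Obj C" and h: "h \<in> Hom C (n \<odot> y) d"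
  shows "pmor (Lprof M C y) (ru_inv M n) h (pstr (Lprof M C y) n I y (act_lu C y)) = h"
  using Lprof_pmor_ru_inv_pstr[OF n y act_lu_hom[OF y] h] act_lu_inv_lu[OF y] act_id[OF n y]
    C.comp_id_left[OF h] by simp

lemma Rmor_natural:
  assumes f: "f \<in> Hom C x y" and k: "k \<in> Hom C c' c" and g: "g \<in> Hom M d d'"
    and h: "h \<in> Hom C c (d \<odot> x)"
  shows "Rmor M C f c' d' (pmor (Rprof M C x) k g h) = pmor (Rprof M C y) k g (Rmor M C f c d h)"
proof -
  have x: "x \<in> Obj C" and y: "y \<in> Obj C" and d: "d \<in> Obj M" "d' \<in> Obj M"
    using C.hom_objs[OF f] M.hom_objs[OF g] by auto
  have gx: "g \<lhd> x \<in> Hom C (d \<odot> x) (d' \<odot> x)" and gy: "g \<lhd> y \<in> Hom C (d \<odot> y) (d' \<odot> y)"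
    using act_hom[OF g C.id_hom[OF x]] act_hom[OF g C.id_hom[OF y]] .
  have df: "d \<rhd> f \<in> Hom C (d \<odot> x) (d \<odot> y)" and d'f: "d' \<rhd> f \<in> Hom C (d' \<odot> x) (d' \<odot> y)"
    using act_hom[OF M.id_hom[OF d(1)] f] act_hom[OF M.id_hom[OF d(2)] f] .
  have "(k \<Zsemi> h \<Zsemi> g \<lhd> x) \<Zsemi> d' \<rhd> f = k \<Zsemi> h \<Zsemi> g \<lhd> x \<Zsemi> d' \<rhd> f"
    using C.comp_assoc[OF k C.comp_hom[OF h gx] d'f] C.comp_assoc[OF h gx d'f] by simp
  also have "\<dots> = k \<Zsemi> (h \<Zsemi> d \<rhd> f) \<Zsemi> g \<lhd> y"
    using act_interchange[OF g f] C.comp_assoc[OF h df gy] by simp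
  finally show ?thesis
    unfolding Rprof_def Rmor_def by simp
qed

lemma Rmor_strong:
  assumes f: "f \<in> Hom C x y" and m: "m \<in> Obj M" and n: "n \<in> Obj M"
    and h: "h \<in> Hom C c (n \<odot> x)"
  shows "Rmor M C f (m \<odot> c) (m \<otimes> n) (pstr (Rprof M C x) m c n h) =
         pstr (Rprof M C y) m c n (Rmor M C f c n h)"
proof -
  have x: "x \<in> Obj C" and y: "y \<in> Obj C"
    using C.hom_objs[OF f] by auto
  have mh: "m \<rhd> h \<in> Hom C (m \<odot> c) (m \<odot> n \<odot> x)"
    using act_hom[OF M.id_hom[OF m] h] .
  have nf: "n \<rhd> f \<in> Hom C (n \<odot> x) (n \<odot> y)"
    using act_hom[OF M.id_hom[OF n] f] .
  have "(m \<rhd> h \<Zsemi> act_as_inv C m n x) \<Zsemi> (m \<otimes> n) \<rhd> f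
      = m \<rhd> h \<Zsemi> m \<rhd> n \<rhd> f \<Zsemi> act_as_inv C m n y"
    using C.comp_assoc[OF mh act_as_inv_hom[OF m n x] act_hom[OF M.id_hom[OF tensor_closed[OF m n]] f]]
      act_as_inv_natural[OF m n f] by simp
  also have "\<dots> = m \<rhd> (h \<Zsemi> n \<rhd> f) \<Zsemi> act_as_inv C m n y"
    using C.comp_assoc[OF mh act_hom[OF M.id_hom[OF m] nf] act_as_inv_hom[OF m n y]]
      act_left_comp[OF m h nf] by simp
  finally show ?thesis
    unfolding Rprof_def Rmor_def by simp
qed

lemma Rmor_tamb_mor:
  assumes f: "f \<in> Hom C x y"
  shows "tamb_mor C M (Obj M) (act_ob C) (tens_ob M) (Rprof M C x) (Rprof M C y) (Rmor M C f)"
proof -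
  have "Rmor M C f c n h \<in> pob (Rprof M C y) c n" if "n \<in> Obj M" "h \<in> pob (Rprof M C x) c n" for c n h
    using that C.comp_hom[OF _ act_hom[OF M.id_hom[OF that(1)] f]] by (simp add: Rprof_def Rmor_def)
  then show ?thesis
    unfolding tamb_mor_def using Rmor_natural[OF f] Rmor_strong[OF f] by (simp add: Rprof_def)
qed

lemma Lmor_natural:
  assumes f: "f \<in> Hom C x y" and g: "g \<in> Hom M d' d" and k: "k \<in> Hom C c c'"
    and h: "h \<in> Hom C (d \<odot> y) c"
  shows "Lmor M C f d' c' (pmor (Lprof M C y) g k h) = pmor (Lprof M C x) g k (Lmor M C f d c h)"
proof -
  have x: "x \<in> Obj C" and y: "y \<in> Obj C" and d: "d \<in> Obj M" "d' \<in> Obj M"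
    using C.hom_objs[OF f] M.hom_objs[OF g] by auto
  have gx: "g \<lhd> x \<in> Hom C (d' \<odot> x) (d \<odot> x)" and gy: "g \<lhd> y \<in> Hom C (d' \<odot> y) (d \<odot> y)"
    using act_hom[OF g C.id_hom[OF x]] act_hom[OF g C.id_hom[OF y]] .
  have df: "d \<rhd> f \<in> Hom C (d \<odot> x) (d \<odot> y)" and d'f: "d' \<rhd> f \<in> Hom C (d' \<odot> x) (d' \<odot> y)"
    using act_hom[OF M.id_hom[OF d(1)] f] act_hom[OF M.id_hom[OF d(2)] f] .
  have hk: "h \<Zsemi> k \<in> Hom C (d \<odot> y) c'"
    using C.comp_hom[OF h k] .
  have "d' \<rhd> f \<Zsemi> g \<lhd> y \<Zsemi> h \<Zsemi> k = (d' \<rhd> f \<Zsemi> g \<lhd> y) \<Zsemi> h \<Zsemi> k"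
    using C.comp_assoc[OF d'f gy hk] by simp
  also have "\<dots> = g \<lhd> x \<Zsemi> (d \<rhd> f \<Zsemi> h) \<Zsemi> k"
    using act_interchange[OF g f] C.comp_assoc[OF gx df hk] C.comp_assoc[OF df h k] by simp
  finally show ?thesis
    unfolding Lprof_def Lmor_def by simp
qed

lemma Lmor_strong:
  assumes f: "f \<in> Hom C x y" and m: "m \<in> Obj M" and n: "n \<in> Obj M"
    and h: "h \<in> Hom C (n \<odot> y) c"
  shows "Lmor M C f (m \<otimes> n) (m \<odot> c) (pstr (Lprof M C y) m n c h) =
         pstr (Lprof M C x) m n c (Lmor M C f n c h)"
proof -
  have x: "x \<in> Obj C" and y: "y \<in> Obj C"
    using C.hom_objs[OF f] by auto
  have mh: "m \<rhd> h \<in> Hom C (m \<odot> n \<odot> y) (m \<odot> c)"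
    using act_hom[OF M.id_hom[OF m] h] .
  have nf: "n \<rhd> f \<in> Hom C (n \<odot> x) (n \<odot> y)"
    using act_hom[OF M.id_hom[OF n] f] .
  have mnf: "m \<rhd> n \<rhd> f \<in> Hom C (m \<odot> n \<odot> x) (m \<odot> n \<odot> y)"
    using act_hom[OF M.id_hom[OF m] nf] .
  have "(m \<otimes> n) \<rhd> f \<Zsemi> act_as C m n y \<Zsemi> m \<rhd> h
      = ((m \<otimes> n) \<rhd> f \<Zsemi> act_as C m n y) \<Zsemi> m \<rhd> h"
    using C.comp_assoc[OF act_hom[OF M.id_hom[OF tensor_closed[OF m n]] f] act_as_hom[OF m n y] mh]
    by simp
  also have "\<dots> = act_as C m n x \<Zsemi> m \<rhd> n \<rhd> f \<Zsemi> m \<rhd> h"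
    using act_as_natural_left[OF m n f] C.comp_assoc[OF act_as_hom[OF m n x] mnf mh] by simp
  also have "\<dots> = act_as C m n x \<Zsemi> m \<rhd> (n \<rhd> f \<Zsemi> h)"
    using act_left_comp[OF m nf h] by simp
  finally show ?thesis
    unfolding Lprof_def Lmor_def by simp
qed

lemma Lmor_tamb_mor:
  assumes f: "f \<in> Hom C x y"
  shows "tamb_mor M C (Obj M) (tens_ob M) (act_ob C) (Lprof M C y) (Lprof M C x) (Lmor M C f)"
proof -
  have "Lmor M C f n c h \<in> pob (Lprof M C x) n c" if "n \<in> Obj M" "h \<in> pob (Lprof M C y) n c" for n c h
    using that C.comp_hom[OF act_hom[OF M.id_hom[OF that(1)] f]] by (simp add: Lprof_def Lmor_def)
  then show ?thesis
    unfolding tamb_mor_def using Lmor_natural[OF f] Lmor_strong[OF f] by (simp add: Lprof_def)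
qed

lemma tamb_mor_Rprof_eq_Rmor:
  assumes x: "x \<in> Obj C" and y: "y \<in> Obj C"
    and \<tau>: "tamb_mor C M (Obj M) (act_ob C) (tens_ob M) (Rprof M C x) (Rprof M C y) \<tau>"
  shows "tamb_eq C M (Rprof M C x) \<tau> (Rmor M C (\<tau> x I (act_lu_inv C x) \<Zsemi> act_lu C y))"
  unfolding tamb_eq_def
proof (intro ballI)
  fix c n h
  assume c: "c \<in> Obj C" and n: "n \<in> Obj M" and "h \<in> pob (Rprof M C x) c n"
  then have h: "h \<in> Hom C c (n \<odot> x)"
    by (simp add: Rprof_def)
  let ?t = "\<tau> x I (act_lu_inv C x)"
  let ?u = "pstr (Rprof M C x) n x I (act_lu_inv C x)"
  have generic: "act_lu_inv C x \<in> pob (Rprof M C x) x I"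
    using act_lu_inv_hom[OF x] by (simp add: Rprof_def)
  have t: "?t \<in> Hom C x (I \<odot> y)"
    using tamb_mor_closed[OF \<tau> x unit_obj generic] by (simp add: Rprof_def)
  have u: "?u \<in> pob (Rprof M C x) (n \<odot> x) (n \<otimes> I)"
    using C.comp_hom[OF act_hom[OF M.id_hom[OF n] act_lu_inv_hom[OF x]] act_as_inv_hom[OF n unit_obj x]]
    by (simp add: Rprof_def)
  have "\<tau> c n h = \<tau> c n (pmor (Rprof M C x) h (ru M n) ?u)"
    using Rprof_generated_by_act_lu_inv[OF n x h] by simp
  also have "\<dots> = pmor (Rprof M C y) h (ru M n) (\<tau> (n \<odot> x) (n \<otimes> I) ?u)"
    using tamb_mor_natural[OF \<tau> act_obj_closed[OF n x] c tensor_closed[OF n unit_obj] n h ru_hom[OF n] u] .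
  also have "\<dots> = pmor (Rprof M C y) h (ru M n) (pstr (Rprof M C y) n x I ?t)"
    using tamb_mor_strong[OF \<tau> n x unit_obj generic] by simp
  also have "\<dots> = Rmor M C (?t \<Zsemi> act_lu C y) c n h"
    unfolding Rmor_def using Rprof_pmor_ru_pstr[OF n y t] .
  finally show "\<tau> c n h = Rmor M C (?t \<Zsemi> act_lu C y) c n h" .
qed

lemma tamb_mor_Lprof_eq_Lmor:
  assumes x: "x \<in> Obj C" and y: "y \<in> Obj C"
    and \<tau>: "tamb_mor M C (Obj M) (tens_ob M) (act_ob C) (Lprof M C y) (Lprof M C x) \<tau>"
  shows "tamb_eq M C (Lprof M C y) \<tau> (Lmor M C (act_lu_inv C x \<Zsemi> \<tau> I y (act_lu C y)))"
  unfolding tamb_eq_def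
proof (intro ballI)
  fix n d h
  assume n: "n \<in> Obj M" and d: "d \<in> Obj C" and "h \<in> pob (Lprof M C y) n d"
  then have h: "h \<in> Hom C (n \<odot> y) d"
    by (simp add: Lprof_def)
  let ?t = "\<tau> I y (act_lu C y)"
  let ?u = "pstr (Lprof M C y) n I y (act_lu C y)"
  have generic: "act_lu C y \<in> pob (Lprof M C y) I y"
    using act_lu_hom[OF y] by (simp add: Lprof_def)
  have t: "?t \<in> Hom C (I \<odot> x) y"
    using tamb_mor_closed[OF \<tau> unit_obj y generic] by (simp add: Lprof_def)
  have u: "?u \<in> pob (Lprof M C y) (n \<otimes> I) (n \<odot> y)"
    using C.comp_hom[OF act_as_hom[OF n unit_obj y] act_hom[OF M.id_hom[OF n] act_lu_hom[OF y]]]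
    by (simp add: Lprof_def)
  have "\<tau> n d h = \<tau> n d (pmor (Lprof M C y) (ru_inv M n) h ?u)"
    using Lprof_generated_by_act_lu[OF n y h] by simp
  also have "\<dots> = pmor (Lprof M C x) (ru_inv M n) h (\<tau> (n \<otimes> I) (n \<odot> y) ?u)"
    using tamb_mor_natural[OF \<tau> tensor_closed[OF n unit_obj] n act_obj_closed[OF n y] d ru_inv_hom[OF n] h u] .
  also have "\<dots> = pmor (Lprof M C x) (ru_inv M n) h (pstr (Lprof M C x) n I y ?t)"
    using tamb_mor_strong[OF \<tau> n unit_obj y generic] by simp
  also have "\<dots> = Lmor M C (act_lu_inv C x \<Zsemi> ?t) n d h"
    unfolding Lmor_def using Lprof_pmor_ru_inv_pstr[OF n x t h] .
  finally show "\<tau> n d h = Lmor M C (act_lu_inv C x \<Zsemi> ?t) n d h" .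
qed

lemma Rmor_faithful:
  assumes f: "f \<in> Hom C x y" and g: "g \<in> Hom C x y"
    and eq: "tamb_eq C M (Rprof M C x) (Rmor M C f) (Rmor M C g)"
  shows "f = g"
proof -
  have x: "x \<in> Obj C" and y: "y \<in> Obj C"
    using C.hom_objs[OF f] by auto
  have "act_lu_inv C x \<in> pob (Rprof M C x) x I"
    using act_lu_inv_hom[OF x] by (simp add: Rprof_def)
  then have "Rmor M C f x I (act_lu_inv C x) = Rmor M C g x I (act_lu_inv C x)"
    using eq x unit_obj unfolding tamb_eq_def by blast
  then have at_generic: "act_lu_inv C x \<Zsemi> I \<rhd> f = act_lu_inv C x \<Zsemi> I \<rhd> g"
    unfolding Rmor_def .
  have recover: "(act_lu_inv C x \<Zsemi> I \<rhd> k) \<Zsemi> act_lu C y = k" if k: "k \<in> Hom C x y" for k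
    using act_lu_conjugate[OF k]
      C.comp_assoc[OF act_lu_inv_hom[OF x] act_hom[OF M.id_hom[OF unit_obj] k] act_lu_hom[OF y]]
    by simp
  have "f = (act_lu_inv C x \<Zsemi> I \<rhd> f) \<Zsemi> act_lu C y"
    using recover[OF f] by simp
  also have "\<dots> = g"
    unfolding at_generic using recover[OF g] .
  finally show ?thesis .
qed

lemma Lmor_faithful:
  assumes f: "f \<in> Hom C x y" and g: "g \<in> Hom C x y"
    and eq: "tamb_eq M C (Lprof M C y) (Lmor M C f) (Lmor M C g)"
  shows "f = g"
proof -
  have y: "y \<in> Obj C"
    using C.hom_objs[OF f] by auto
  have "act_lu C y \<in> pob (Lprof M C y) I y"
    using act_lu_hom[OF y] by (simp add: Lprof_def)
  then have "Lmor M C f I y (act_lu C y) = Lmor M C g I y (act_lu C y)"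
    using eq y unit_obj unfolding tamb_eq_def by blast
  then have at_generic: "I \<rhd> f \<Zsemi> act_lu C y = I \<rhd> g \<Zsemi> act_lu C y"
    unfolding Lmor_def .
  have "f = act_lu_inv C x \<Zsemi> I \<rhd> f \<Zsemi> act_lu C y"
    using act_lu_conjugate[OF f] by simp
  also have "\<dots> = g"
    unfolding at_generic using act_lu_conjugate[OF g] .
  finally show ?thesis .
qed

lemma Rprof_tamb_mor_ex1_Rmor:
  assumes x: "x \<in> Obj C" and y: "y \<in> Obj C"
    and \<tau>: "tamb_mor C M (Obj M) (act_ob C) (tens_ob M) (Rprof M C x) (Rprof M C y) \<tau>"
  shows "\<exists>!f. f \<in> Hom C x y \<and> tamb_eq C M (Rprof M C x) \<tau> (Rmor M C f)"
proof -
  define f where "f = \<tau> x I (act_lu_inv C x) \<Zsemi> act_lu C y"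
  have "\<tau> x I (act_lu_inv C x) \<in> Hom C x (I \<odot> y)"
    using tamb_mor_closed[OF \<tau> x unit_obj] act_lu_inv_hom[OF x] by (simp add: Rprof_def)
  then have f: "f \<in> Hom C x y"
    unfolding f_def using C.comp_hom act_lu_hom[OF y] by blast
  have \<tau>_f: "tamb_eq C M (Rprof M C x) \<tau> (Rmor M C f)"
    unfolding f_def using tamb_mor_Rprof_eq_Rmor[OF x y \<tau>] .
  show ?thesis
  proof (rule ex1I[of _ f])
    fix g
    assume "g \<in> Hom C x y \<and> tamb_eq C M (Rprof M C x) \<tau> (Rmor M C g)"
    moreover have "tamb_eq C M (Rprof M C x) (Rmor M C g) (Rmor M C f)"
      if "tamb_eq C M (Rprof M C x) \<tau> (Rmor M C g)"
      using that \<tau>_f unfolding tamb_eq_def by simp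
    ultimately show "g = f"
      using Rmor_faithful f by blast
  qed (use f \<tau>_f in blast)
qed

lemma Lprof_tamb_mor_ex1_Lmor:
  assumes x: "x \<in> Obj C" and y: "y \<in> Obj C"
    and \<tau>: "tamb_mor M C (Obj M) (tens_ob M) (act_ob C) (Lprof M C y) (Lprof M C x) \<tau>"
  shows "\<exists>!f. f \<in> Hom C x y \<and> tamb_eq M C (Lprof M C y) \<tau> (Lmor M C f)"
proof -
  define f where "f = act_lu_inv C x \<Zsemi> \<tau> I y (act_lu C y)"
  have "\<tau> I y (act_lu C y) \<in> Hom C (I \<odot> x) y"
    using tamb_mor_closed[OF \<tau> unit_obj y] act_lu_hom[OF y] by (simp add: Lprof_def)
  then have f: "f \<in> Hom C x y"
    unfolding f_def using C.comp_hom act_lu_inv_hom[OF x] by blast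
  have \<tau>_f: "tamb_eq M C (Lprof M C y) \<tau> (Lmor M C f)"
    unfolding f_def using tamb_mor_Lprof_eq_Lmor[OF x y \<tau>] .
  show ?thesis
  proof (rule ex1I[of _ f])
    fix g
    assume "g \<in> Hom C x y \<and> tamb_eq M C (Lprof M C y) \<tau> (Lmor M C g)"
    moreover have "tamb_eq M C (Lprof M C y) (Lmor M C g) (Lmor M C f)"
      if "tamb_eq M C (Lprof M C y) \<tau> (Lmor M C g)"
      using that \<tau>_f unfolding tamb_eq_def by simp
    ultimately show "g = f"
      using Lmor_faithful f by blast
  qed (use f \<tau>_f in blast)
qed

end

theorem mainTheorem7:
  fixes M :: "('m, 'ma) moncat" and C :: "('m, 'ma, 'c, 'ca) actegory"
  assumes "monoidal M" and "is_actegory M C"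
  shows "(\<forall>x\<in>Obj C. \<forall>y\<in>Obj C.
            (\<forall>f\<in>Hom C x y. tamb_mor C M (Obj M) (act_ob C) (tens_ob M)
                               (Rprof M C x) (Rprof M C y) (Rmor M C f)) \<and>
            (\<forall>\<tau>. tamb_mor C M (Obj M) (act_ob C) (tens_ob M) (Rprof M C x) (Rprof M C y) \<tau> \<longrightarrow>
                 (\<exists>!f. f \<in> Hom C x y \<and> tamb_eq C M (Rprof M C x) \<tau> (Rmor M C f))))
       \<and> (\<forall>x\<in>Obj C. \<forall>y\<in>Obj C.
            (\<forall>f\<in>Hom C x y. tamb_mor M C (Obj M) (tens_ob M) (act_ob C)
                               (Lprof M C y) (Lprof M C x) (Lmor M C f)) \<and>
            (\<forall>\<tau>. tamb_mor M C (Obj M) (tens_ob M) (act_ob C) (Lprof M C y) (Lprof M C x) \<tau> \<longrightarrow>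
                 (\<exists>!f. f \<in> Hom C x y \<and> tamb_eq M C (Lprof M C y) \<tau> (Lmor M C f))))"
proof -
  interpret monoidal_action M C
    using assms by unfold_locales
  show ?thesis
    using Rmor_tamb_mor Rprof_tamb_mor_ex1_Rmor Lmor_tamb_mor Lprof_tamb_mor_ex1_Lmor by blast
qed

end
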